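(* Consider the model $Y=X+Z_1$, $X=\Theta+Z_2$ with flat prior on $\Theta$, where $Z_2\sim N(0,\sigma^2)$ for some $\sigma>0$ and $Z_1$ is standard Cauchy, represented via a latent variable $Q\sim\mathrm{Ga}(1/2,1/2)$ (shape $1/2$, rate $1/2$) independent of $\Theta$ and $Z_2$, with $Z_1\mid Q\sim N(0,1/Q)$. Fix an observed $y$. The grouped Gibbs sampler iterates: given the current $X_{n-1}$, draw $(\Theta_n,Q_n)$ from $\mathcal L(\Theta,Q\mid Y=y,X=X_{n-1})$ (under which $\Theta$ and $Q$ are conditionally independent), then draw $X_n$ from $\mathcal L(X\mid Y=y,\Theta=\Theta_n,Q=Q_n)$. This grouped Gibbs sampler is not geometrically ergodic.
   Context: A Markov chain with stationary distribution $\mu$ is geometrically ergodic if there exist $r<1$ and a function $M$ such that the total variation distance between the law of the chain after $n$ steps started from $w$ and $\mu$ is at most $M(w)r^n$ for all $n$. *)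

theory Defs
  imports "HOL-Probability.Probability"
begin

text \<open>The full conditionals used by the grouped Gibbs sampler are:
    Theta | Y=y, X=x      ~ N(x, sigma^2)
    Q     | Y=y, X=x      ~ Ga(1, (1+(y-x)^2)/2)  (exponential, rate (1+(y-x)^2)/2),
    (Theta and Q conditionally independent)
    X | Y=y, Theta=t, Q=q ~ N((t/sigma^2 + q*y)/(1/sigma^2+q), 1/(1/sigma^2+q)).\<close>

definition normal_measure :: "real \<Rightarrow> real \<Rightarrow> real measure" where
  "normal_measure m s = density lborel (\<lambda>x. ennreal (normal_density m s x))"

definition exponential_measure :: "real \<Rightarrow> real measure" where
  "exponential_measure l = density lborel (\<lambda>x. ennreal (exponential_density l x))"

definition theta_cond :: "real \<Rightarrow> real \<Rightarrow> real measure" where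
  "theta_cond \<sigma> x = normal_measure x \<sigma>"

definition Q_cond :: "real \<Rightarrow> real \<Rightarrow> real measure" where
  "Q_cond y x = exponential_measure ((1 + (y - x)\<^sup>2) / 2)"

definition X_cond :: "real \<Rightarrow> real \<Rightarrow> real \<Rightarrow> real \<Rightarrow> real measure" where
  "X_cond \<sigma> y t q =
     normal_measure ((t / \<sigma>\<^sup>2 + q * y) / (1 / \<sigma>\<^sup>2 + q)) (1 / sqrt (1 / \<sigma>\<^sup>2 + q))"

definition gibbs_kernel :: "real \<Rightarrow> real \<Rightarrow> real \<Rightarrow> real measure" where
  "gibbs_kernel \<sigma> y x =
     (theta_cond \<sigma> x \<Otimes>\<^sub>M Q_cond y x) \<bind> (\<lambda>(t, q). X_cond \<sigma> y t q)"

fun gibbs_iter :: "real \<Rightarrow> real \<Rightarrow> nat \<Rightarrow> real \<Rightarrow> real measure" where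
  "gibbs_iter \<sigma> y 0 x = return borel x"
| "gibbs_iter \<sigma> y (Suc n) x = gibbs_iter \<sigma> y n x \<bind> gibbs_kernel \<sigma> y"

text \<open>Stationary law: posterior of X given Y = y (flat marginal of X times Cauchy likelihood),
  i.e. the Cauchy law centred at y.\<close>
definition X_posterior :: "real \<Rightarrow> real measure" where
  "X_posterior y = density lborel (\<lambda>x. ennreal (1 / (pi * (1 + (x - y)\<^sup>2))))"

definition tv_dist :: "real measure \<Rightarrow> real measure \<Rightarrow> real" where
  "tv_dist M N = (SUP A \<in> sets borel. \<bar>measure M A - measure N A\<bar>)"

definition geometrically_ergodic ::
  "(nat \<Rightarrow> real \<Rightarrow> real measure) \<Rightarrow> real measure \<Rightarrow> bool" where
  "geometrically_ergodic P \<mu> \<longleftrightarrow>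
     (\<exists>r < 1. \<exists>M :: real \<Rightarrow> real. \<forall>w n. tv_dist (P n w) \<mu> \<le> M w * r ^ n)"

end

theory Submission imports Defs begin

(* The grouped Gibbs sampler is not geometrically ergodic because its X-chain moves too slowly
   compared with the heavy Cauchy tail of its stationary law.

   1. Every conditional law is a probability density on the reals and depends measurably on the
      conditioning values, so the sampler is a subprobability kernel and all iterates are
      subprobability measures on the Borel sets.
   2. Drift bound: the conditional law of X given (Theta, Q) is normal with mean a convex
      combination of Theta and y and variance at most sigma^2, hence one step of the sampler
      raises the second moment E (X - y)^2 by at most 2 sigma^2.  Started at y, after n steps
      E (X_n - y)^2 <= 2 n sigma^2, and by Chebyshev  P(|X_n - y| > R) <= 2 n sigma^2 / R^2.
   3. The Cauchy law centred at y puts mass at least 1 / (5 pi R) on {|x - y| > R} for R >= 1.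
   4. Taking R proportional to n + 1, the total variation distance after n steps is at least
      c / (n + 1) for some c > 0, a polynomial rate that no geometric bound M r^n (r < 1)
      can dominate. *)

lemma density_kernel_measurable:
  fixes f :: "'a \<Rightarrow> real \<Rightarrow> real"
  assumes f[measurable]: "(\<lambda>p. f (fst p) (snd p)) \<in> borel_measurable (M \<Otimes>\<^sub>M borel)"
    and sub: "\<And>a. a \<in> space M \<Longrightarrow> subprob_space (density lborel (\<lambda>x. ennreal (f a x)))"
  shows "(\<lambda>a. density lborel (\<lambda>x. ennreal (f a x))) \<in> M \<rightarrow>\<^sub>M subprob_algebra borel"
proof (rule measurable_subprob_algebra)
  show "\<And>a. a \<in> space M \<Longrightarrow> subprob_space (density lborel (\<lambda>x. ennreal (f a x)))"
    by (rule sub)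
  show "\<And>a. a \<in> space M \<Longrightarrow> sets (density lborel (\<lambda>x. ennreal (f a x))) = sets borel"
    by simp
  fix A :: "real set" assume A[measurable]: "A \<in> sets borel"
  have "(\<lambda>p. ennreal (f (fst p) (snd p)) * indicator A (snd p)) \<in> borel_measurable (M \<Otimes>\<^sub>M lborel)"
    by (subst measurable_cong_sets[OF sets_pair_measure_cong[OF refl sets_lborel] refl]) measurable
  then have "(\<lambda>a. \<integral>\<^sup>+ x. ennreal (f a x) * indicator A x \<partial>lborel) \<in> borel_measurable M"
    using lborel.borel_measurable_nn_integral[of "\<lambda>a x. ennreal (f a x) * indicator A x" M]
    by (simp add: case_prod_beta')
  then show "(\<lambda>a. emeasure (density lborel (\<lambda>x. ennreal (f a x))) A) \<in> borel_measurable M"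
  proof (rule measurable_cong[THEN iffD1, rotated])
    fix a assume "a \<in> space M"
    then have "(\<lambda>x. ennreal (f a x)) \<in> borel_measurable borel"
      using measurable_Pair2[OF f] by simp
    then show "(\<integral>\<^sup>+ x. ennreal (f a x) * indicator A x \<partial>lborel)
        = emeasure (density lborel (\<lambda>x. ennreal (f a x))) A"
      using A by (subst emeasure_density) auto
  qed
qed

text \<open>Even for a degenerate standard deviation s = 0 the normal "law" is a subprobability
  (the zero measure), so no side condition is needed for the kernel property.\<close>
lemma subprob_space_normal_measure: "subprob_space (normal_measure m s)"
proof (cases "s = 0")
  case True
  then have "normal_measure m s = density lborel (\<lambda>_. 0)"
    by (simp add: normal_measure_def normal_density_def)
  then show ?thesis
    by (intro subprob_spaceI) (simp_all add: emeasure_density)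
next
  case False
  then have "normal_measure m s = density lborel (normal_density m \<bar>s\<bar>)"
    by (simp add: normal_measure_def normal_density_def fun_eq_iff)
  moreover have "prob_space (density lborel (normal_density m \<bar>s\<bar>))"
    using False by (intro prob_space_normal_density) simp
  ultimately show ?thesis by (simp add: prob_space_imp_subprob_space)
qed

lemma subprob_space_Q_cond: "subprob_space (Q_cond y x)"
  unfolding Q_cond_def exponential_measure_def
  by (intro prob_space_imp_subprob_space prob_space_exponential_density) (simp add: add_pos_nonneg)

lemma sets_theta_cond [simp]: "sets (theta_cond \<sigma> x) = sets borel"
  by (simp add: theta_cond_def normal_measure_def)

lemma sets_Q_cond [simp]: "sets (Q_cond y x) = sets borel"
  by (simp add: Q_cond_def exponential_measure_def)

lemma theta_cond_kernel: "theta_cond \<sigma> \<in> borel \<rightarrow>\<^sub>M subprob_algebra borel"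
  unfolding theta_cond_def[abs_def] normal_measure_def
  by (rule density_kernel_measurable[OF _ subprob_space_normal_measure[unfolded normal_measure_def]])
     (simp add: normal_density_def)

lemma Q_cond_kernel: "Q_cond y \<in> borel \<rightarrow>\<^sub>M subprob_algebra borel"
  using subprob_space_Q_cond[of y]
  unfolding Q_cond_def[abs_def] exponential_measure_def
  by (intro density_kernel_measurable) (simp_all add: exponential_density_def)

lemma X_cond_kernel:
  "(\<lambda>p. X_cond \<sigma> y (fst p) (snd p)) \<in> borel \<Otimes>\<^sub>M borel \<rightarrow>\<^sub>M subprob_algebra borel"
  unfolding X_cond_def normal_measure_def
  by (rule density_kernel_measurable[OF _ subprob_space_normal_measure[unfolded normal_measure_def]])
     (simp add: normal_density_def)

text \<open>The sampler step without the paired lambda-pattern, as needed by the bind lemmas.\<close>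
lemma gibbs_kernel_alt:
  "gibbs_kernel \<sigma> y x = (theta_cond \<sigma> x \<Otimes>\<^sub>M Q_cond y x) \<bind> (\<lambda>p. X_cond \<sigma> y (fst p) (snd p))"
  by (simp add: gibbs_kernel_def case_prod_beta')

lemma gibbs_kernel_measurable: "gibbs_kernel \<sigma> y \<in> borel \<rightarrow>\<^sub>M subprob_algebra borel"
proof -
  have "(\<lambda>x. theta_cond \<sigma> x \<Otimes>\<^sub>M Q_cond y x) \<in> borel \<rightarrow>\<^sub>M subprob_algebra (borel \<Otimes>\<^sub>M borel)"
    by (intro measurable_pair_measure theta_cond_kernel Q_cond_kernel)
  then show ?thesis
    unfolding gibbs_kernel_alt[abs_def] by (rule measurable_bind2[OF _ X_cond_kernel])
qed

lemma gibbs_iter_subprob: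
  "subprob_space (gibbs_iter \<sigma> y n w) \<and> sets (gibbs_iter \<sigma> y n w) = sets borel"
proof (induction n)
  case 0
  then show ?case by (simp add: prob_space_imp_subprob_space prob_space_return)
next
  case (Suc n)
  let ?P = "gibbs_iter \<sigma> y n w"
  have K: "gibbs_kernel \<sigma> y \<in> ?P \<rightarrow>\<^sub>M subprob_algebra borel"
    using gibbs_kernel_measurable measurable_cong_sets[OF conjunct2[OF Suc.IH] refl] by blast
  have "space ?P \<noteq> {}" using Suc.IH subprob_space.subprob_not_empty by blast
  then show ?case
    using subprob_space_bind[OF _ K] sets_bind[OF sets_kernel[OF K]] Suc.IH by simp
qed

lemma gibbs_kernel_measurable_iter:
  "gibbs_kernel \<sigma> y \<in> gibbs_iter \<sigma> y n w \<rightarrow>\<^sub>M subprob_algebra borel"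
  using gibbs_kernel_measurable measurable_cong_sets[OF conjunct2[OF gibbs_iter_subprob] refl]
  by blast

section \<open>Drift of the second moment\<close>

lemma normal_second_moment:
  fixes m s c :: real
  assumes s: "s > 0"
  shows "(\<integral>\<^sup>+ z. ennreal ((z - c)\<^sup>2) \<partial>normal_measure m s) = ennreal ((m - c)\<^sup>2 + s\<^sup>2)"
proof -
  have var: "has_bochner_integral lborel (\<lambda>x. normal_density m s x * (x - m)^(2*1)) (s\<^sup>2)"
    using normal_moment_even[OF s, where k=1 and \<mu>=m] by (simp add: power2_eq_square)
  have mean: "has_bochner_integral lborel (\<lambda>x. normal_density m s x * (x - m)^(2*0+1)) 0"
    using normal_moment_odd[OF s, where k=0 and \<mu>=m] by simp
  have mass: "has_bochner_integral lborel (\<lambda>x. normal_density m s x) 1"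
    using normal_moment_even[OF s, where k=0 and \<mu>=m] by simp
  have "has_bochner_integral lborel
      (\<lambda>x. normal_density m s x * (x - m)^(2*1)
         + (2*(m-c)) * (normal_density m s x * (x - m)^(2*0+1)) + (m-c)\<^sup>2 * normal_density m s x)
      (s\<^sup>2 + (2*(m-c))*0 + (m-c)\<^sup>2*1)"
    by (intro has_bochner_integral_add has_bochner_integral_mult_right var mean mass)
  moreover have "(\<lambda>x. normal_density m s x * (x - m)^(2*1)
         + (2*(m-c)) * (normal_density m s x * (x - m)^(2*0+1)) + (m-c)\<^sup>2 * normal_density m s x)
      = (\<lambda>x. normal_density m s x * (x - c)\<^sup>2)"
    by (auto simp: fun_eq_iff algebra_simps power2_eq_square)
  ultimately have "has_bochner_integral lborel (\<lambda>x. normal_density m s x * (x - c)\<^sup>2) ((m - c)\<^sup>2 + s\<^sup>2)"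
    by (simp add: add.commute)
  then show ?thesis
    unfolding normal_measure_def
    by (subst nn_integral_density)
       (auto simp: ennreal_mult[symmetric] nn_integral_eq_integral has_bochner_integral_iff)
qed

text \<open>The conditional mean of X given (Theta, Q) = (t, q) is a convex combination of t and y,
  and its conditional variance is at most sigma^2: the second moment about y of the X-update
  exceeds (t - y)^2 by at most sigma^2.\<close>
lemma X_cond_second_moment_bound:
  fixes \<sigma> t q y :: real
  assumes s: "\<sigma> > 0" and q: "q \<ge> 0"
  shows "((t / \<sigma>\<^sup>2 + q * y) / (1 / \<sigma>\<^sup>2 + q) - y)\<^sup>2 + (1 / sqrt (1 / \<sigma>\<^sup>2 + q))\<^sup>2
         \<le> (t - y)\<^sup>2 + \<sigma>\<^sup>2"
proof -
  define a where "a = 1 / \<sigma>\<^sup>2"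
  have a: "a > 0" using s by (simp add: a_def)
  have d: "a + q \<ge> a" "a + q > 0" using a q by auto
  have "(t / \<sigma>\<^sup>2 + q * y) / (1 / \<sigma>\<^sup>2 + q) = (a * t + q * y) / (a + q)"
    by (simp add: a_def)
  then have shrink: "(t / \<sigma>\<^sup>2 + q * y) / (1 / \<sigma>\<^sup>2 + q) - y = (a / (a + q)) * (t - y)"
    using d by (simp add: field_simps)
  have "0 \<le> a / (a + q)" "a / (a + q) \<le> 1" using a d by auto
  then have "(a / (a + q))\<^sup>2 * (t - y)\<^sup>2 \<le> 1 * (t - y)\<^sup>2"
    by (intro mult_right_mono) (auto simp: power_le_one)
  then have bias: "((a / (a + q)) * (t - y))\<^sup>2 \<le> (t - y)\<^sup>2"
    by (simp only: power_mult_distrib mult_1)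
  have "(1 / sqrt (1 / \<sigma>\<^sup>2 + q))\<^sup>2 = 1 / (a + q)"
    using d by (simp add: a_def[symmetric] power_divide)
  also have "\<dots> \<le> 1 / a" using a d by (simp add: frac_le)
  also have "\<dots> = \<sigma>\<^sup>2" by (simp add: a_def)
  finally show ?thesis using bias shrink by simp
qed

text \<open>Drift condition: one step of the sampler increases E (X - y)^2 by at most 2 sigma^2
  (sigma^2 from the Theta-update and sigma^2 from the X-update).\<close>
lemma gibbs_kernel_drift:
  assumes s: "\<sigma> > 0"
  shows "(\<integral>\<^sup>+ z. ennreal ((z - y)\<^sup>2) \<partial>gibbs_kernel \<sigma> y x) \<le> ennreal ((x - y)\<^sup>2 + 2 * \<sigma>\<^sup>2)"
proof -
  let ?T = "theta_cond \<sigma> x" and ?Q = "Q_cond y x"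
  define G where "G t q = (\<integral>\<^sup>+ z. ennreal ((z - y)\<^sup>2) \<partial>X_cond \<sigma> y t q)" for t q
  interpret Q: subprob_space ?Q by (rule subprob_space_Q_cond)
  interpret T: subprob_space ?T unfolding theta_cond_def by (rule subprob_space_normal_measure)
  have "sets (?T \<Otimes>\<^sub>M ?Q) = sets (borel \<Otimes>\<^sub>M borel)"
    by (intro sets_pair_measure_cong) simp_all
  then have XK: "(\<lambda>p. X_cond \<sigma> y (fst p) (snd p)) \<in> ?T \<Otimes>\<^sub>M ?Q \<rightarrow>\<^sub>M subprob_algebra borel"
    using X_cond_kernel measurable_cong_sets by blast
  have G_measurable: "(\<lambda>p. G (fst p) (snd p)) \<in> borel_measurable (?T \<Otimes>\<^sub>M ?Q)"
    unfolding G_def by (rule measurable_compose[OF XK nn_integral_measurable_subprob_algebra]) simp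
  have G_bound: "(\<integral>\<^sup>+ q. G t q \<partial>?Q) \<le> ennreal ((t - y)\<^sup>2) + ennreal (\<sigma>\<^sup>2)" for t
  proof -
    have "AE q in ?Q. q \<ge> 0"
      unfolding Q_cond_def exponential_measure_def
      by (subst AE_density) (auto simp: exponential_density_def)
    then have "AE q in ?Q. G t q \<le> ennreal ((t - y)\<^sup>2 + \<sigma>\<^sup>2)"
    proof eventually_elim
      case (elim q)
      have sd_pos: "1 / sqrt (1 / \<sigma>\<^sup>2 + q) > 0" using s elim by (simp add: add_pos_nonneg)
      show ?case
        unfolding G_def X_cond_def
        by (subst normal_second_moment[OF sd_pos])
           (rule ennreal_leI[OF X_cond_second_moment_bound[OF s elim]])
    qed
    then have "(\<integral>\<^sup>+ q. G t q \<partial>?Q) \<le> (\<integral>\<^sup>+ q. ennreal ((t - y)\<^sup>2 + \<sigma>\<^sup>2) \<partial>?Q)"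
      by (rule nn_integral_mono_AE)
    also have "\<dots> \<le> ennreal ((t - y)\<^sup>2 + \<sigma>\<^sup>2)"
      using Q.emeasure_space_le_1 by (simp add: mult_left_le)
    finally show ?thesis by (simp add: ennreal_plus)
  qed
  have "(\<integral>\<^sup>+ z. ennreal ((z - y)\<^sup>2) \<partial>gibbs_kernel \<sigma> y x) = (\<integral>\<^sup>+ p. G (fst p) (snd p) \<partial>(?T \<Otimes>\<^sub>M ?Q))"
    unfolding gibbs_kernel_alt G_def by (rule nn_integral_bind[OF _ XK]) simp
  also have "\<dots> = (\<integral>\<^sup>+ t. \<integral>\<^sup>+ q. G t q \<partial>?Q \<partial>?T)"
    using Q.nn_integral_fst[OF G_measurable] by simp
  also have "\<dots> \<le> (\<integral>\<^sup>+ t. ennreal ((t - y)\<^sup>2) + ennreal (\<sigma>\<^sup>2) \<partial>?T)"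
    by (intro nn_integral_mono G_bound)
  also have "\<dots> = (\<integral>\<^sup>+ t. ennreal ((t - y)\<^sup>2) \<partial>?T) + (\<integral>\<^sup>+ t. ennreal (\<sigma>\<^sup>2) \<partial>?T)"
    by (rule nn_integral_add) (simp_all add: measurable_cong_sets[OF sets_theta_cond refl])
  also have "\<dots> \<le> ennreal ((x - y)\<^sup>2 + \<sigma>\<^sup>2) + ennreal (\<sigma>\<^sup>2)"
    using T.emeasure_space_le_1 normal_second_moment[OF s]
    by (intro add_mono) (simp_all add: theta_cond_def mult_left_le)
  also have "\<dots> = ennreal ((x - y)\<^sup>2 + 2 * \<sigma>\<^sup>2)"
    by (simp add: ennreal_plus[symmetric] del: ennreal_plus)
  finally show ?thesis .
qed

lemma gibbs_iter_second_moment: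
  assumes s: "\<sigma> > 0"
  shows "(\<integral>\<^sup>+ z. ennreal ((z - y)\<^sup>2) \<partial>gibbs_iter \<sigma> y n w) \<le> ennreal ((w - y)\<^sup>2 + 2 * real n * \<sigma>\<^sup>2)"
proof (induction n)
  case 0
  then show ?case by (simp add: nn_integral_return)
next
  case (Suc n)
  let ?P = "gibbs_iter \<sigma> y n w"
  interpret P: subprob_space ?P using gibbs_iter_subprob by blast
  have sets_P: "sets ?P = sets borel" using gibbs_iter_subprob by blast
  have "(\<integral>\<^sup>+ z. ennreal ((z - y)\<^sup>2) \<partial>gibbs_iter \<sigma> y (Suc n) w)
      = (\<integral>\<^sup>+ x. \<integral>\<^sup>+ z. ennreal ((z - y)\<^sup>2) \<partial>gibbs_kernel \<sigma> y x \<partial>?P)"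
    by (simp only: gibbs_iter.simps) (rule nn_integral_bind[OF _ gibbs_kernel_measurable_iter], simp)
  also have "\<dots> \<le> (\<integral>\<^sup>+ x. ennreal ((x - y)\<^sup>2) + ennreal (2 * \<sigma>\<^sup>2) \<partial>?P)"
    by (rule nn_integral_mono)
       (simp add: gibbs_kernel_drift[OF s] ennreal_plus[symmetric] del: ennreal_plus)
  also have "\<dots> = (\<integral>\<^sup>+ x. ennreal ((x - y)\<^sup>2) \<partial>?P) + (\<integral>\<^sup>+ x. ennreal (2 * \<sigma>\<^sup>2) \<partial>?P)"
    by (rule nn_integral_add) (simp_all add: measurable_cong_sets[OF sets_P refl])
  also have "\<dots> \<le> ennreal ((w - y)\<^sup>2 + 2 * real n * \<sigma>\<^sup>2) + ennreal (2 * \<sigma>\<^sup>2)"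
    using Suc.IH P.emeasure_space_le_1 by (intro add_mono) (auto simp: mult_left_le)
  also have "\<dots> = ennreal ((w - y)\<^sup>2 + 2 * real (Suc n) * \<sigma>\<^sup>2)"
    by (simp add: ennreal_plus[symmetric] algebra_simps del: ennreal_plus)
  finally show ?case .
qed

lemma chebyshev_second_moment:
  fixes P :: "real measure"
  assumes P: "finite_measure P" "sets P = sets borel" and R: "R > 0"
    and moment: "(\<integral>\<^sup>+ z. ennreal ((z - y)\<^sup>2) \<partial>P) \<le> ennreal B" and B: "B \<ge> 0"
  shows "measure P {z. R < \<bar>z - y\<bar>} * R\<^sup>2 \<le> B"
proof -
  interpret P: finite_measure P by (rule P(1))
  let ?A = "{z. R < \<bar>z - y\<bar>}"
  have A: "?A \<in> sets P" using P(2) by simp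
  have "ennreal (measure P ?A * R\<^sup>2) = (\<integral>\<^sup>+ z. indicator ?A z * ennreal (R\<^sup>2) \<partial>P)"
    using A by (simp add: P.emeasure_eq_measure ennreal_mult nn_integral_multc)
  also have "\<dots> \<le> (\<integral>\<^sup>+ z. ennreal ((z - y)\<^sup>2) \<partial>P)"
  proof (rule nn_integral_mono)
    fix z
    show "indicator ?A z * ennreal (R\<^sup>2) \<le> ennreal ((z - y)\<^sup>2)"
    proof (cases "z \<in> ?A")
      case True
      then have "\<bar>R\<bar> \<le> \<bar>z - y\<bar>" using R by simp
      then have "R\<^sup>2 \<le> (z - y)\<^sup>2" by (simp add: abs_le_square_iff)
      then show ?thesis using True by (simp add: ennreal_leI)
    qed simp
  qed
  also have "\<dots> \<le> ennreal B" by (rule moment)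
  finally show ?thesis using B by (simp add: ennreal_le_iff)
qed

lemma gibbs_iter_tail:
  assumes s: "\<sigma> > 0" and R: "R > 0"
  shows "measure (gibbs_iter \<sigma> y n y) {z. R < \<bar>z - y\<bar>} * R\<^sup>2 \<le> 2 * real n * \<sigma>\<^sup>2"
  using gibbs_iter_subprob[of \<sigma> y n y] gibbs_iter_second_moment[OF s, of y n y] R
  by (intro chebyshev_second_moment) (auto dest: subprob_space.axioms(1))

section \<open>The heavy tail of the stationary law\<close>

lemma X_posterior_finite: "finite_measure (X_posterior y)"
proof
  have "integrable lborel (\<lambda>x. inverse (1 + x\<^sup>2) :: real)"
    using integrable_inverse_1_plus_square by (simp add: set_integrable_def)
  then have finite_integral: "(\<integral>\<^sup>+ x. ennreal (inverse (1 + x\<^sup>2)) \<partial>lborel) < \<infinity>"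
    using integrableD(2) by (simp add: top.not_eq_extremum add_pos_nonneg)
  have density_split: "ennreal (1 / (pi * (1 + x\<^sup>2))) = ennreal (1 / pi) * ennreal (inverse (1 + x\<^sup>2))"
    for x :: real
    by (subst ennreal_mult[symmetric]) (auto simp: field_simps add_pos_nonneg)
  have "(\<integral>\<^sup>+ x. ennreal (1 / (pi * (1 + (x - y)\<^sup>2))) \<partial>lborel)
      = ennreal \<bar>1::real\<bar> * (\<integral>\<^sup>+ x. ennreal (1 / (pi * (1 + ((y + 1 * x) - y)\<^sup>2))) \<partial>lborel)"
    by (rule nn_integral_real_affine[where c=1 and t=y]) auto
  also have "\<dots> = ennreal (1 / pi) * (\<integral>\<^sup>+ x. ennreal (inverse (1 + x\<^sup>2)) \<partial>lborel)"
    by (simp add: density_split nn_integral_cmult)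
  also have "\<dots> < \<infinity>" using finite_integral by (simp add: ennreal_mult_less_top)
  finally show "emeasure (X_posterior y) (space (X_posterior y)) \<noteq> \<infinity>"
    unfolding X_posterior_def by (simp add: emeasure_density)
qed

text \<open>The Cauchy law puts mass of order 1/R outside [y - R, y + R]; it suffices to look at the
  interval (y + R, y + 2R), on which the density is at least 1 / (pi (1 + 4 R^2)).\<close>
lemma X_posterior_tail:
  assumes R: "R \<ge> 1"
  shows "1 / (5 * pi * R) \<le> measure (X_posterior y) {z. R < \<bar>z - y\<bar>}"
proof -
  interpret F: finite_measure "X_posterior y" by (rule X_posterior_finite)
  let ?I = "{y + R <..< y + 2 * R}"
  define c where "c = 1 / (pi * (1 + 4 * R\<^sup>2))"
  have density_bound: "c \<le> 1 / (pi * (1 + (x - y)\<^sup>2))" if "x \<in> ?I" for x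
  proof -
    have "(x - y)\<^sup>2 \<le> (2 * R)\<^sup>2" using that R by (intro power_mono) auto
    then show ?thesis
      unfolding c_def
      by (intro divide_left_mono) (auto simp: power_mult_distrib intro!: mult_pos_pos add_pos_nonneg)
  qed
  have "ennreal (c * R) = (\<integral>\<^sup>+ x. ennreal c * indicator ?I x \<partial>lborel)"
    using R by (simp add: nn_integral_cmult ennreal_mult[symmetric] c_def)
  also have "\<dots> \<le> (\<integral>\<^sup>+ x. ennreal (1 / (pi * (1 + (x - y)\<^sup>2))) * indicator ?I x \<partial>lborel)"
    by (intro nn_integral_mono) (auto simp: indicator_def intro: ennreal_leI density_bound)
  also have "\<dots> = emeasure (X_posterior y) ?I"
    unfolding X_posterior_def by (simp add: emeasure_density)
  also have "\<dots> \<le> emeasure (X_posterior y) {z. R < \<bar>z - y\<bar>}"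
    using R by (intro emeasure_mono) (auto simp: X_posterior_def)
  finally have "c * R \<le> measure (X_posterior y) {z. R < \<bar>z - y\<bar>}"
    by (simp add: F.emeasure_eq_measure ennreal_le_iff)
  moreover have "1 / (5 * pi * R) \<le> c * R"
  proof -
    have "1 \<le> R * R" using mult_mono[of 1 R 1 R] R by simp
    then have "pi * (1 + 4 * R\<^sup>2) \<le> pi * (5 * R\<^sup>2)" by (simp add: power2_eq_square)
    then have "1 / (pi * (5 * R\<^sup>2)) \<le> c"
      unfolding c_def by (intro divide_left_mono) (auto intro!: mult_pos_pos add_pos_nonneg)
    then have "R * (1 / (pi * (5 * R\<^sup>2))) \<le> R * c" using R by (intro mult_left_mono) auto
    then show ?thesis using R by (simp add: power2_eq_square field_simps)
  qed
  ultimately show ?thesis by linarith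
qed

section \<open>Total variation lower bound and failure of geometric ergodicity\<close>

lemma tv_dist_lower:
  assumes M: "finite_measure M" and N: "finite_measure N" and A: "A \<in> sets borel"
  shows "\<bar>measure M A - measure N A\<bar> \<le> tv_dist M N"
proof -
  interpret M: finite_measure M by (rule M)
  interpret N: finite_measure N by (rule N)
  have "\<bar>measure M B - measure N B\<bar> \<le> measure M (space M) + measure N (space N)" for B
    using M.bounded_measure[of B] N.bounded_measure[of B]
      measure_nonneg[of M B] measure_nonneg[of N B] unfolding abs_le_iff by linarith
  then have "bdd_above ((\<lambda>B. \<bar>measure M B - measure N B\<bar>) ` sets borel)"
    by (intro bdd_aboveI2)
  then show ?thesis
    unfolding tv_dist_def using A by (rule cSUP_upper2) simp
qed

text \<open>Started at y, the chain is still at total variation distance of order 1/n from the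
  Cauchy law after n steps: at radius R = c0 (n + 1) the Cauchy tail 1/(5 pi R) is twice the
  Chebyshev bound on the tail of the chain.\<close>
lemma gibbs_tv_polynomial_lower_bound:
  assumes s: "\<sigma> > 0"
  shows "\<exists>c>0. \<forall>n. c / (real n + 1) \<le> tv_dist (gibbs_iter \<sigma> y n y) (X_posterior y)"
proof -
  define c0 where "c0 = 20 * pi * \<sigma>\<^sup>2 + 1"
  have c0: "c0 \<ge> 1" "c0 \<ge> 20 * pi * \<sigma>\<^sup>2" using pi_gt_zero by (auto simp: c0_def)
  have "1 / (10 * pi * c0) / (real n + 1) \<le> tv_dist (gibbs_iter \<sigma> y n y) (X_posterior y)" for n
  proof -
    define R where "R = c0 * (real n + 1)"
    have R: "R \<ge> 1" using c0 mult_mono[of 1 c0 1 "real n + 1"] by (simp add: R_def)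
    let ?A = "{z. R < \<bar>z - y\<bar>}" and ?P = "gibbs_iter \<sigma> y n y"
    have "measure ?P ?A * R\<^sup>2 * (10 * pi) \<le> 2 * real n * \<sigma>\<^sup>2 * (10 * pi)"
      using R by (intro mult_right_mono gibbs_iter_tail[OF s]) auto
    also have "\<dots> \<le> c0 * real n"
      using mult_right_mono[OF c0(2), of "real n"] by (simp add: algebra_simps)
    also have "\<dots> \<le> R" using c0 by (simp add: R_def algebra_simps)
    finally have "measure ?P ?A * R\<^sup>2 * (10 * pi) \<le> R" .
    then have chain_tail: "measure ?P ?A \<le> 1 / (10 * pi * R)"
      using R by (simp add: field_simps power2_eq_square)
    have "1 / (5 * pi * R) - measure ?P ?A \<le> tv_dist ?P (X_posterior y)"
      using X_posterior_tail[OF R, of y]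
        tv_dist_lower[of ?P "X_posterior y" ?A] gibbs_iter_subprob[of \<sigma> y n y] X_posterior_finite
      by (auto dest: subprob_space.axioms(1))
    moreover have "1 / (5 * pi * R) - 1 / (10 * pi * R) = 1 / (10 * pi * R)"
      using R by (simp add: field_simps)
    moreover have "1 / (10 * pi * R) = 1 / (10 * pi * c0) / (real n + 1)"
      by (simp add: R_def mult.assoc)
    ultimately show ?thesis using chain_tail by linarith
  qed
  moreover have "1 / (10 * pi * c0) > 0" using c0 by simp
  ultimately show ?thesis by blast
qed

lemma polynomial_not_geometric:
  fixes c K r :: real
  assumes c: "c > 0" and r: "r < 1" and bound: "\<And>n. c / (real n + 1) \<le> K * r ^ n"
  shows False
proof -
  have "K * r > 0" "K * r * r > 0"
    using bound[of 1] bound[of 2] c by (simp_all add: power2_eq_square mult.assoc)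
  then have r_pos: "r > 0" by (rule zero_less_mult_pos[rotated])
  have lim: "(\<lambda>n. K * (real n * r ^ n + r ^ n)) \<longlonglongrightarrow> K * (0 + 0)"
    using r_pos r by (intro tendsto_intros powser_times_n_limit_0 LIMSEQ_power_zero) simp_all
  have "c \<le> K * (real n * r ^ n + r ^ n)" for n
    using bound[of n] by (simp add: field_simps)
  then have "c \<le> K * (0 + 0)"
    by (intro LIMSEQ_le_const[OF lim]) auto
  with c show False by simp
qed

theorem mainTheorem8:
  fixes \<sigma> y :: real
  assumes "\<sigma> > 0"
  shows "\<not> geometrically_ergodic (gibbs_iter \<sigma> y) (X_posterior y)"
proof
  assume "geometrically_ergodic (gibbs_iter \<sigma> y) (X_posterior y)"
  then obtain r M where r: "r < 1"
    and geometric: "\<And>w n. tv_dist (gibbs_iter \<sigma> y n w) (X_posterior y) \<le> M w * r ^ n"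
    unfolding geometrically_ergodic_def by blast
  obtain c where "c > 0"
    and polynomial: "\<And>n. c / (real n + 1) \<le> tv_dist (gibbs_iter \<sigma> y n y) (X_posterior y)"
    using gibbs_tv_polynomial_lower_bound[OF assms] by blast
  show False
    using polynomial_not_geometric[OF \<open>c > 0\<close> r] polynomial geometric order_trans by blast
qed

end
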